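(* For the $N$-relay 1-2-1 diamond network with relays operating in HD, the linear program $\mathrm{P1^d}$ with $\mathsf C_p=\frac{\ell_{p,0}\ell_{N+1,p}}{\ell_{p,0}+\ell_{N+1,p}}$ has an optimal solution $(x_1,\dots,x_N)$ with at most $3$ indices $p$ such that $x_p>0$. Hence the HD approximate capacity $\mathsf{C}_{\rm cs,iid}$ is achieved by activating at most three relays, independently of $N$.
   Context: Diamond network: nodes $[0:N+1]$, source $0$, destination $N+1$, relays $[1:N]$; the only links are $(0,p)$ and $(p,N+1)$ for $p\in[1:N]$, with positive capacities $\ell_{p,0}$ and $\ell_{N+1,p}$. $\mathrm{P1^d}$ is the linear program $\max\sum_{p=1}^N x_p\mathsf C_p$ subject to $0\le x_p\le1$ for all $p\in[1:N]$, $\sum_{p=1}^N x_p\mathsf C_p/\ell_{p,0}\le1$, and $\sum_{p=1}^N x_p\mathsf C_p/\ell_{N+1,p}\le1$. In the HD case (with the HD $\mathsf C_p$ above) its optimal value equals $\mathsf{C}_{\rm cs,iid}$, the HD approximate capacity $\max_\lambda\min_\Omega\sum_{i\in\Omega,j\in\Omega^c}(\sum_{s:\,(i,j)\text{ active in }s}\lambda_s)\ell_{j,i}$ over probability vectors on HD beam states and cuts $0\in\Omega\subseteq[0:N]$. *)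

theory Defs
  imports Main "HOL.Real"
begin

text \<open>Diamond network with relays 1..N. l0 p = capacity of link (0,p),
  l1 p = capacity of link (p,N+1).  HD single-relay capacity C_p.\<close>

definition Cp :: "real \<Rightarrow> real \<Rightarrow> real" where
  "Cp a b = a * b / (a + b)"

definition C_hd :: "(nat \<Rightarrow> real) \<Rightarrow> (nat \<Rightarrow> real) \<Rightarrow> nat \<Rightarrow> real" where
  "C_hd l0 l1 p = Cp (l0 p) (l1 p)"

definition P1d_feasible ::
  "nat \<Rightarrow> (nat \<Rightarrow> real) \<Rightarrow> (nat \<Rightarrow> real) \<Rightarrow> (nat \<Rightarrow> real) \<Rightarrow> bool" where
  "P1d_feasible N l0 l1 x \<longleftrightarrow>
     (\<forall>p\<in>{1..N}. 0 \<le> x p \<and> x p \<le> 1) \<and>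
     (\<Sum>p=1..N. x p * C_hd l0 l1 p / l0 p) \<le> 1 \<and>
     (\<Sum>p=1..N. x p * C_hd l0 l1 p / l1 p) \<le> 1"

definition P1d_obj ::
  "nat \<Rightarrow> (nat \<Rightarrow> real) \<Rightarrow> (nat \<Rightarrow> real) \<Rightarrow> (nat \<Rightarrow> real) \<Rightarrow> real" where
  "P1d_obj N l0 l1 x = (\<Sum>p=1..N. x p * C_hd l0 l1 p)"

definition P1d_optimal ::
  "nat \<Rightarrow> (nat \<Rightarrow> real) \<Rightarrow> (nat \<Rightarrow> real) \<Rightarrow> (nat \<Rightarrow> real) \<Rightarrow> bool" where
  "P1d_optimal N l0 l1 x \<longleftrightarrow> P1d_feasible N l0 l1 x \<and>
     (\<forall>y. P1d_feasible N l0 l1 y \<longrightarrow> P1d_obj N l0 l1 y \<le> P1d_obj N l0 l1 x)"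

end

theory Submission
  imports Defs "HOL-Analysis.Analysis"
begin

text \<open>
  Since \<open>Cp a b / a + Cp a b / b = 1\<close>, the two cut constraints of \<open>P1\<^sup>d\<close> add up to
  \<open>\<Sum>p. x p \<le> 2\<close>. Among the optimal solutions vanishing off the relays, a compact set, take
  one maximising \<open>\<Sum>p. (x p)\<^sup>2\<close>. If it had three fractional coordinates, moving along a nonzero
  direction supported on them that preserves both constraint sums would keep it feasible and
  optimal in both directions, while the strictly convex \<open>\<Sum>p. (x p)\<^sup>2\<close> increases in one of them.
  So at most two coordinates are fractional, and with \<open>\<Sum>p. x p \<le> 2\<close> at most three are positive.
\<close>

lemma compact_lex_argmax:
  fixes g h :: "'a::topological_space \<Rightarrow> real"
  assumes "compact K" "K \<noteq> {}" "continuous_on K g" "continuous_on K h"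
  obtains x where "x \<in> K" "\<And>y. y \<in> K \<Longrightarrow> g y \<le> g x"
    "\<And>y. y \<in> K \<Longrightarrow> g y = g x \<Longrightarrow> h y \<le> h x"
proof -
  obtain x0 where "x0 \<in> K" and x0_max: "\<And>y. y \<in> K \<Longrightarrow> g y \<le> g x0"
    using continuous_attains_sup[OF assms(1-3)] by blast
  define L where "L = {y \<in> K. g y = g x0}"
  have "compact L"
    unfolding L_def
    using closedin_compact[OF assms(1) continuous_closedin_preimage_constant[OF assms(3)]] .
  moreover have "L \<noteq> {}"
    using \<open>x0 \<in> K\<close> by (auto simp: L_def)
  moreover have "continuous_on L h"
    using assms(4) by (rule continuous_on_subset) (auto simp: L_def)
  ultimately obtain x where x: "x \<in> L" and x_max: "\<forall>y\<in>L. h y \<le> h x"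
    using continuous_attains_sup by metis
  show ?thesis
  proof (rule that)
    show "x \<in> K"
      using x by (simp add: L_def)
    show "g y \<le> g x" if "y \<in> K" for y
      using x x0_max[OF that] by (simp add: L_def)
    show "h y \<le> h x" if "y \<in> K" "g y = g x" for y
      using x x_max that by (simp add: L_def)
  qed
qed

lemma lex_argmax_midpoint_le:
  fixes g h :: "'a \<Rightarrow> real"
  assumes "\<And>y. y \<in> K \<Longrightarrow> g y \<le> g x" "\<And>y. y \<in> K \<Longrightarrow> g y = g x \<Longrightarrow> h y \<le> h x"
    and "y \<in> K" "z \<in> K" "g y + g z = 2 * g x"
  shows "h y + h z \<le> 2 * h x"
proof -
  have "g y = g x" "g z = g x"
    using assms(1)[OF assms(3)] assms(1)[OF assms(4)] assms(5) by linarith+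
  then show ?thesis
    using assms(2)[OF assms(3)] assms(2)[OF assms(4)] by linarith
qed

lemma compact_PiE_UNIV:
  fixes S :: "'a \<Rightarrow> 'b::topological_space set"
  assumes "\<And>i. compact (S i)"
  shows "compact (PiE UNIV S)"
proof -
  have "compactin (product_topology (\<lambda>_. euclidean) UNIV) (PiE UNIV S)"
    using assms by (simp add: compactin_PiE)
  then show ?thesis
    by (simp add: euclidean_product_topology)
qed

lemma exists_step_in_unit_interval:
  fixes x d :: "'a \<Rightarrow> real"
  assumes "finite F" "\<forall>p\<in>F. 0 < x p \<and> x p < 1"
  obtains t where "t > 0"
    "\<And>p s. p \<in> F \<Longrightarrow> \<bar>s\<bar> \<le> 1 \<Longrightarrow> 0 \<le> x p + s * t * d p \<and> x p + s * t * d p \<le> 1"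
proof -
  have "\<forall>\<^sub>F t in at_right (0::real). t * \<bar>d p\<bar> < min (x p) (1 - x p)" if "p \<in> F" for p
  proof (rule order_tendstoD(2))
    show "((\<lambda>t. t * \<bar>d p\<bar>) \<longlongrightarrow> 0) (at_right 0)"
      by (intro tendsto_mult_left_zero tendsto_ident_at)
    show "0 < min (x p) (1 - x p)"
      using assms(2) that by simp
  qed
  then have "\<forall>\<^sub>F t in at_right (0::real). 0 < t \<and> (\<forall>p\<in>F. t * \<bar>d p\<bar> < min (x p) (1 - x p))"
    using assms(1) by (simp add: eventually_ball_finite eventually_conj_iff eventually_at_right_less)
  then obtain t where "0 < t" and t_small: "\<forall>p\<in>F. t * \<bar>d p\<bar> < min (x p) (1 - x p)"
    using eventually_happens'[OF trivial_limit_at_right_real] by blast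
  show ?thesis
  proof (rule that[OF \<open>0 < t\<close>])
    fix p and s :: real
    assume "p \<in> F" "\<bar>s\<bar> \<le> 1"
    then have "\<bar>s * t * d p\<bar> \<le> t * \<bar>d p\<bar>"
      using \<open>0 < t\<close> by (simp add: abs_mult mult_left_le_one_le)
    with t_small \<open>p \<in> F\<close> show "0 \<le> x p + s * t * d p \<and> x p + s * t * d p \<le> 1"
      by (auto simp: abs_le_iff)
  qed
qed

lemma sum_power2_add_plus_sum_power2_diff:
  fixes x e :: "'a \<Rightarrow> real"
  shows "(\<Sum>p\<in>A. (x p + e p)\<^sup>2) + (\<Sum>p\<in>A. (x p - e p)\<^sup>2) = 2 * (\<Sum>p\<in>A. (x p)\<^sup>2) + 2 * (\<Sum>p\<in>A. (e p)\<^sup>2)"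
  by (simp add: sum.distrib[symmetric] sum_distrib_left power2_eq_square algebra_simps)

lemma sum_three_points:
  assumes "finite I" "i \<in> I" "j \<in> I" "k \<in> I" "i \<noteq> j" "i \<noteq> k" "j \<noteq> k"
    and "\<And>p. p \<notin> {i, j, k} \<Longrightarrow> f p = 0"
  shows "(\<Sum>p\<in>I. f p) = f i + f j + f k"
proof -
  have "(\<Sum>p\<in>I. f p) = (\<Sum>p\<in>{i, j, k}. f p)"
    using assms by (intro sum.mono_neutral_right) auto
  then show ?thesis
    using assms(5-7) by (simp add: add.assoc)
qed

lemma exists_balanced_direction:
  fixes w :: "'a \<Rightarrow> real"
  assumes "finite I" "i \<in> I" "j \<in> I" "k \<in> I" "i \<noteq> j" "i \<noteq> k" "j \<noteq> k"
  obtains d where "\<And>p. p \<notin> {i, j, k} \<Longrightarrow> d p = 0" "(\<Sum>p\<in>I. d p) = 0"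
    "(\<Sum>p\<in>I. d p * w p) = 0" "(\<Sum>p\<in>I. (d p)\<^sup>2) > 0"
proof -
  obtain a b c :: real where abc: "a + b + c = 0" "a * w i + b * w j + c * w k = 0"
    "a \<noteq> 0 \<or> b \<noteq> 0 \<or> c \<noteq> 0"
  proof (cases "w i = w j \<and> w j = w k")
    case True
    then show ?thesis
      by (intro that[of 1 "-1" 0]) auto
  next
    case False
    then show ?thesis
      by (intro that[of "w k - w j" "w i - w k" "w j - w i"]) (auto simp: algebra_simps)
  qed
  define d where "d p = (if p = i then a else if p = j then b else if p = k then c else 0)" for p
  have d_supp: "d p = 0" if "p \<notin> {i, j, k}" for p
    using that by (simp add: d_def)
  have sum_d: "(\<Sum>p\<in>I. d p * g p) = a * g i + b * g j + c * g k" for g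
    using sum_three_points[OF assms, of "\<lambda>p. d p * g p"] d_supp assms(5-7) by (simp add: d_def)
  show ?thesis
  proof (rule that[OF d_supp])
    show "(\<Sum>p\<in>I. d p) = 0"
      using sum_d[of "\<lambda>_. 1"] abc(1) by simp
    show "(\<Sum>p\<in>I. d p * w p) = 0"
      using sum_d[of w] abc(2) by simp
    have "(\<Sum>p\<in>I. (d p)\<^sup>2) = a\<^sup>2 + b\<^sup>2 + c\<^sup>2"
      using sum_d[of d] assms(5-7) by (simp add: d_def power2_eq_square)
    also have "\<dots> > 0"
      using abc(3) by (auto simp: add_pos_nonneg add_nonneg_pos)
    finally show "(\<Sum>p\<in>I. (d p)\<^sup>2) > 0" .
  qed
qed

lemma card_positive_le_3:
  fixes x :: "'a \<Rightarrow> real"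
  assumes "finite I" "\<forall>p\<in>I. 0 \<le> x p \<and> x p \<le> 1" "(\<Sum>p\<in>I. x p) \<le> 2"
    and "card {p\<in>I. 0 < x p \<and> x p < 1} \<le> 2"
  shows "card {p\<in>I. 0 < x p} \<le> 3"
proof -
  define One where "One = {p\<in>I. x p = 1}"
  define Frac where "Frac = {p\<in>I. 0 < x p \<and> x p < 1}"
  have fin: "finite One" "finite Frac" and disj: "One \<inter> Frac = {}"
    using assms(1) by (auto simp: One_def Frac_def)
  have supp: "{p\<in>I. 0 < x p} = One \<union> Frac"
    using assms(2) by (force simp: One_def Frac_def)
  have "real (card One) + (\<Sum>p\<in>Frac. x p) = (\<Sum>p\<in>One \<union> Frac. x p)"
    using fin disj by (simp add: sum.union_disjoint One_def)
  also have "\<dots> \<le> (\<Sum>p\<in>I. x p)"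
    using assms(1,2) by (intro sum_mono2) (auto simp: supp[symmetric])
  finally have bound: "real (card One) + (\<Sum>p\<in>Frac. x p) \<le> 2"
    using assms(3) by linarith
  have "card One + card Frac \<le> 3"
  proof (cases "Frac = {}")
    case True
    then show ?thesis
      using bound by simp
  next
    case False
    then have "(\<Sum>p\<in>Frac. x p) > 0"
      using fin by (intro sum_pos) (auto simp: Frac_def)
    then have "card One \<le> 1"
      using bound by simp
    then show ?thesis
      using assms(4) by (simp add: Frac_def)
  qed
  then show ?thesis
    using fin disj by (simp add: supp card_Un_disjoint)
qed

lemma Cp_div_add_div:
  assumes "a > 0" "b > 0"
  shows "Cp a b / a + Cp a b / b = 1"
proof -
  have "Cp a b / a + Cp a b / b = b / (a + b) + a / (a + b)"
    using assms by (simp add: Cp_def)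
  also have "\<dots> = 1"
    using assms by (simp add: add_divide_distrib[symmetric])
  finally show ?thesis .
qed

lemma P1d_cut_sums_add:
  assumes pos: "\<forall>p\<in>{1..N}. l0 p > 0 \<and> l1 p > 0"
  shows "(\<Sum>p=1..N. x p * C_hd l0 l1 p / l0 p) + (\<Sum>p=1..N. x p * C_hd l0 l1 p / l1 p) = (\<Sum>p=1..N. x p)"
proof -
  have "x p * C_hd l0 l1 p / l0 p + x p * C_hd l0 l1 p / l1 p = x p" if "p \<in> {1..N}" for p
  proof -
    have "x p * C_hd l0 l1 p / l0 p + x p * C_hd l0 l1 p / l1 p
        = x p * (C_hd l0 l1 p / l0 p + C_hd l0 l1 p / l1 p)"
      by (simp add: algebra_simps)
    also have "\<dots> = x p"
      using pos that by (simp add: C_hd_def Cp_div_add_div)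
    finally show ?thesis .
  qed
  then show ?thesis
    by (simp add: sum.distrib[symmetric])
qed

lemma P1d_feasible_sum_le_2:
  assumes pos: "\<forall>p\<in>{1..N}. l0 p > 0 \<and> l1 p > 0" and "P1d_feasible N l0 l1 x"
  shows "(\<Sum>p=1..N. x p) \<le> 2"
  using P1d_cut_sums_add[OF pos, of x] assms(2) by (simp add: P1d_feasible_def)

lemma P1d_feasible_add_balanced:
  assumes pos: "\<forall>p\<in>{1..N}. l0 p > 0 \<and> l1 p > 0" and "P1d_feasible N l0 l1 x"
    and "\<forall>p\<in>{1..N}. 0 \<le> x p + d p \<and> x p + d p \<le> 1"
    and "(\<Sum>p=1..N. d p) = 0" and "(\<Sum>p=1..N. d p * C_hd l0 l1 p / l0 p) = 0"
  shows "P1d_feasible N l0 l1 (\<lambda>p. x p + d p)"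
proof -
  have "(\<Sum>p=1..N. d p * C_hd l0 l1 p / l1 p) = 0"
    using P1d_cut_sums_add[OF pos, of d] assms(4,5) by simp
  with assms(2-5) show ?thesis
    by (simp add: P1d_feasible_def distrib_right add_divide_distrib sum.distrib)
qed

text \<open>Feasible points vanishing off the relays: unlike the whole feasible set, this set is compact.\<close>

definition P1d_region :: "nat \<Rightarrow> (nat \<Rightarrow> real) \<Rightarrow> (nat \<Rightarrow> real) \<Rightarrow> (nat \<Rightarrow> real) set" where
  "P1d_region N l0 l1 = {x. P1d_feasible N l0 l1 x \<and> (\<forall>p. p \<notin> {1..N} \<longrightarrow> x p = 0)}"

lemma compact_P1d_region: "compact (P1d_region N l0 l1)"
proof -
  define S where "S p = (if p \<in> {1..N} then {0..1} else {0::real})" for p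
  define c where "c e = {x. (\<Sum>p=1..N. x p * C_hd l0 l1 p / e p) \<le> 1}" for e
  have S_iff: "x p \<in> S p \<longleftrightarrow> (p \<in> {1..N} \<longrightarrow> 0 \<le> x p \<and> x p \<le> 1) \<and> (p \<notin> {1..N} \<longrightarrow> x p = 0)"
    for x :: "nat \<Rightarrow> real" and p
    by (auto simp: S_def)
  have "P1d_region N l0 l1 = PiE UNIV S \<inter> (c l0 \<inter> c l1)"
    unfolding set_eq_iff Int_iff P1d_region_def P1d_feasible_def PiE_iff extensional_UNIV S_iff c_def
    by blast
  moreover have "compact (PiE UNIV S)"
    by (rule compact_PiE_UNIV) (simp add: S_def)
  moreover have "closed (c e)" for e
    unfolding c_def divide_inverse
    by (intro closed_Collect_le continuous_intros continuous_on_product_coordinates)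
  ultimately show ?thesis
    by (simp add: compact_Int_closed closed_Int)
qed

lemma zero_in_P1d_region: "(\<lambda>_. 0) \<in> P1d_region N l0 l1"
  by (simp add: P1d_region_def P1d_feasible_def)

lemma P1d_region_add_balanced:
  assumes pos: "\<forall>p\<in>{1..N}. l0 p > 0 \<and> l1 p > 0" and x: "x \<in> P1d_region N l0 l1"
    and box: "\<And>p. d p \<noteq> 0 \<Longrightarrow> p \<in> {1..N} \<and> 0 \<le> x p + d p \<and> x p + d p \<le> 1"
    and "(\<Sum>p=1..N. d p) = 0" and "(\<Sum>p=1..N. d p * C_hd l0 l1 p / l0 p) = 0"
  shows "(\<lambda>p. x p + d p) \<in> P1d_region N l0 l1"
proof -
  have "0 \<le> x p + d p \<and> x p + d p \<le> 1" if "p \<in> {1..N}" for p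
  proof (cases "d p = 0")
    case True
    then show ?thesis
      using x that by (simp add: P1d_region_def P1d_feasible_def)
  qed (use box in blast)
  then have "P1d_feasible N l0 l1 (\<lambda>p. x p + d p)"
    using x assms(4,5) by (intro P1d_feasible_add_balanced[OF pos]) (simp_all add: P1d_region_def)
  moreover have "x p + d p = 0" if "p \<notin> {1..N}" for p
    using x box[of p] that by (cases "d p = 0") (auto simp: P1d_region_def)
  ultimately show ?thesis
    by (simp add: P1d_region_def)
qed

lemma P1d_optimal_if_max_on_region:
  assumes "x \<in> P1d_region N l0 l1"
    and "\<And>y. y \<in> P1d_region N l0 l1 \<Longrightarrow> P1d_obj N l0 l1 y \<le> P1d_obj N l0 l1 x"
  shows "P1d_optimal N l0 l1 x"
  unfolding P1d_optimal_def
proof (intro conjI allI impI)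
  show "P1d_feasible N l0 l1 x"
    using assms(1) by (simp add: P1d_region_def)
  fix y assume "P1d_feasible N l0 l1 y"
  define y' where "y' p = (if p \<in> {1..N} then y p else 0)" for p
  have "P1d_feasible N l0 l1 y' = P1d_feasible N l0 l1 y" "P1d_obj N l0 l1 y' = P1d_obj N l0 l1 y"
    unfolding P1d_feasible_def P1d_obj_def by (simp_all add: y'_def)
  then have "y' \<in> P1d_region N l0 l1"
    using \<open>P1d_feasible N l0 l1 y\<close> by (simp add: P1d_region_def y'_def)
  with assms(2) \<open>P1d_obj N l0 l1 y' = P1d_obj N l0 l1 y\<close>
  show "P1d_obj N l0 l1 y \<le> P1d_obj N l0 l1 x"
    by metis
qed

lemma P1d_lex_max_fractional_card_le_2:
  assumes pos: "\<forall>p\<in>{1..N}. l0 p > 0 \<and> l1 p > 0"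
    and x: "x \<in> P1d_region N l0 l1"
    and obj_max: "\<And>y. y \<in> P1d_region N l0 l1 \<Longrightarrow> P1d_obj N l0 l1 y \<le> P1d_obj N l0 l1 x"
    and sq_max: "\<And>y. y \<in> P1d_region N l0 l1 \<Longrightarrow> P1d_obj N l0 l1 y = P1d_obj N l0 l1 x \<Longrightarrow>
      (\<Sum>p=1..N. (y p)\<^sup>2) \<le> (\<Sum>p=1..N. (x p)\<^sup>2)"
  shows "card {p\<in>{1..N}. 0 < x p \<and> x p < 1} \<le> 2"
proof (rule ccontr)
  let ?Frac = "{p\<in>{1..N}. 0 < x p \<and> x p < 1}"
  assume "\<not> card ?Frac \<le> 2"
  then have "3 \<le> card ?Frac"
    by simp
  then obtain F where "F \<subseteq> ?Frac" "card F = 3"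
    by (meson obtain_subset_with_card_n)
  then obtain i j k where ijk: "i \<in> ?Frac" "j \<in> ?Frac" "k \<in> ?Frac" "i \<noteq> j" "i \<noteq> k" "j \<noteq> k"
    by (auto simp: card_3_iff)
  obtain d where d_supp: "\<And>p. p \<notin> {i, j, k} \<Longrightarrow> d p = 0" and sum_d: "(\<Sum>p=1..N. d p) = 0"
    and sum_dw: "(\<Sum>p=1..N. d p * (C_hd l0 l1 p / l0 p)) = 0" and sum_dd: "(\<Sum>p=1..N. (d p)\<^sup>2) > 0"
    using exists_balanced_direction[of "{1..N}" i j k "\<lambda>p. C_hd l0 l1 p / l0 p"] ijk by auto
  obtain t where "t > 0" and step: "\<And>p s. p \<in> {i, j, k} \<Longrightarrow> \<bar>s\<bar> \<le> 1 \<Longrightarrow>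
      0 \<le> x p + s * t * d p \<and> x p + s * t * d p \<le> 1"
    using exists_step_in_unit_interval[of "{i, j, k}" x d] ijk by auto
  define y where "y s = (\<lambda>p. x p + s * t * d p)" for s :: real
  have y_region: "y s \<in> P1d_region N l0 l1" if "\<bar>s\<bar> = 1" for s
    unfolding y_def
  proof (rule P1d_region_add_balanced[OF pos x])
    show "p \<in> {1..N} \<and> 0 \<le> x p + s * t * d p \<and> x p + s * t * d p \<le> 1" if "s * t * d p \<noteq> 0" for p
      using that ijk d_supp[of p] step[of p s] \<open>\<bar>s\<bar> = 1\<close> by auto
    show "(\<Sum>p=1..N. s * t * d p) = 0"
      using sum_d by (simp add: sum_distrib_left[symmetric])
    have "(\<Sum>p=1..N. s * t * d p * C_hd l0 l1 p / l0 p) = s * t * (\<Sum>p=1..N. d p * C_hd l0 l1 p / l0 p)"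
      by (simp add: sum_distrib_left mult.assoc)
    with sum_dw show "(\<Sum>p=1..N. s * t * d p * C_hd l0 l1 p / l0 p) = 0"
      by simp
  qed
  have "P1d_obj N l0 l1 (y s) = P1d_obj N l0 l1 x + s * t * (\<Sum>p=1..N. d p * C_hd l0 l1 p)" for s
    by (simp add: P1d_obj_def y_def distrib_right sum.distrib sum_distrib_left mult.assoc)
  then have "(\<Sum>p=1..N. (y 1 p)\<^sup>2) + (\<Sum>p=1..N. (y (- 1) p)\<^sup>2) \<le> 2 * (\<Sum>p=1..N. (x p)\<^sup>2)"
    using obj_max sq_max y_region[of 1] y_region[of "- 1"]
    by (intro lex_argmax_midpoint_le[where g = "P1d_obj N l0 l1"]) auto
  moreover have "(\<Sum>p=1..N. (y 1 p)\<^sup>2) + (\<Sum>p=1..N. (y (- 1) p)\<^sup>2)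
      = 2 * (\<Sum>p=1..N. (x p)\<^sup>2) + 2 * t\<^sup>2 * (\<Sum>p=1..N. (d p)\<^sup>2)"
    using sum_power2_add_plus_sum_power2_diff[of x "\<lambda>p. t * d p" "{1..N}"]
    by (simp add: y_def power_mult_distrib sum_distrib_left mult.assoc)
  moreover have "2 * t\<^sup>2 * (\<Sum>p=1..N. (d p)\<^sup>2) > 0"
    using \<open>t > 0\<close> sum_dd by simp
  ultimately show False
    by simp
qed

theorem lemma5:
  fixes N :: nat and l0 l1 :: "nat \<Rightarrow> real"
  assumes "\<forall>p\<in>{1..N}. l0 p > 0 \<and> l1 p > 0"
  shows "\<exists>x. P1d_optimal N l0 l1 x \<and> card {p\<in>{1..N}. x p > 0} \<le> 3"
proof -
  have "continuous_on UNIV (P1d_obj N l0 l1)" "continuous_on UNIV (\<lambda>x::nat \<Rightarrow> real. \<Sum>p=1..N. (x p)\<^sup>2)"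
    unfolding P1d_obj_def by (intro continuous_intros continuous_on_product_coordinates)+
  then have "continuous_on (P1d_region N l0 l1) (P1d_obj N l0 l1)"
    "continuous_on (P1d_region N l0 l1) (\<lambda>x. \<Sum>p=1..N. (x p)\<^sup>2)"
    by (auto intro: continuous_on_subset)
  moreover have "P1d_region N l0 l1 \<noteq> {}"
    using zero_in_P1d_region by blast
  ultimately obtain x where x: "x \<in> P1d_region N l0 l1"
    and obj_max: "\<And>y. y \<in> P1d_region N l0 l1 \<Longrightarrow> P1d_obj N l0 l1 y \<le> P1d_obj N l0 l1 x"
    and sq_max: "\<And>y. y \<in> P1d_region N l0 l1 \<Longrightarrow> P1d_obj N l0 l1 y = P1d_obj N l0 l1 x \<Longrightarrow>
      (\<Sum>p=1..N. (y p)\<^sup>2) \<le> (\<Sum>p=1..N. (x p)\<^sup>2)"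
    using compact_lex_argmax[OF compact_P1d_region] by blast
  have opt: "P1d_optimal N l0 l1 x"
    using x obj_max by (rule P1d_optimal_if_max_on_region)
  then have feas: "P1d_feasible N l0 l1 x"
    by (simp add: P1d_optimal_def)
  have "card {p\<in>{1..N}. 0 < x p} \<le> 3"
  proof (rule card_positive_le_3)
    show "\<forall>p\<in>{1..N}. 0 \<le> x p \<and> x p \<le> 1"
      using feas by (simp add: P1d_feasible_def)
    show "(\<Sum>p\<in>{1..N}. x p) \<le> 2"
      using P1d_feasible_sum_le_2[OF assms feas] .
    show "card {p\<in>{1..N}. 0 < x p \<and> x p < 1} \<le> 2"
      using assms x obj_max sq_max by (rule P1d_lex_max_fractional_card_le_2)
  qed simp
  with opt show ?thesis
    by blast
qed

end
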